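(* Let $X$ be a real normed linear space and $x\in X\setminus\{\theta\}$. Let $y_1,y_2\in X\setminus\{\theta\}$ satisfy $x\perp_B y_1$ and $x\perp_B y_2$. If $x$ is $\varepsilon$-smooth, where $0\le\varepsilon<\frac{2\|y_1+y_2\|}{\|y_1\|+\|y_2\|}\le2$, then there exists $\varepsilon_1\in[0,1)$ such that $x\perp_B^{\varepsilon_1}(y_1+y_2)$.
   Context: $x\perp_B y$ (Birkhoff–James orthogonality) means $\|x+\lambda y\|\ge\|x\|$ for all $\lambda\in\mathbb{R}$. For $\delta\in[0,1)$, $x\perp_B^\delta y$ means $\|x+\lambda y\|^2\ge\|x\|^2-2\delta\|x\|\|\lambda y\|$ for all $\lambda\in\mathbb{R}$. For $x\neq\theta$, $J(x)=\{f\in S_{X^*}:f(x)=\|x\|\}$, and $x$ is $\varepsilon$-smooth if $\sup_{f,g\in J(x)}\|f-g\|\le\varepsilon$. *)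

theory Defs
  imports "HOL-Analysis.Analysis"
begin

definition bj_orth :: "'a::real_normed_vector \<Rightarrow> 'a \<Rightarrow> bool" where
  "bj_orth x y \<longleftrightarrow> (\<forall>t::real. norm (x + t *\<^sub>R y) \<ge> norm x)"

definition bj_orth_approx :: "real \<Rightarrow> 'a::real_normed_vector \<Rightarrow> 'a \<Rightarrow> bool" where
  "bj_orth_approx \<delta> x y \<longleftrightarrow>
     (\<forall>t::real. (norm (x + t *\<^sub>R y))\<^sup>2 \<ge> (norm x)\<^sup>2 - 2 * \<delta> * norm x * norm (t *\<^sub>R y))"

definition supp_funct :: "'a::real_normed_vector \<Rightarrow> ('a \<Rightarrow>\<^sub>L real) set" where
  "supp_funct x = {f. norm f = 1 \<and> blinfun_apply f x = norm x}"

definition eps_smooth :: "real \<Rightarrow> 'a::real_normed_vector \<Rightarrow> bool" where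
  "eps_smooth \<epsilon> x \<longleftrightarrow> x \<noteq> 0 \<and> (\<forall>f\<in>supp_funct x. \<forall>g\<in>supp_funct x. norm (f - g) \<le> \<epsilon>)"

end

theory Submission
  imports Defs
begin

(* By the Hahn-Banach theorem, x \<noteq> 0 is Birkhoff-James orthogonal to y exactly when some
   f \<in> J(x) vanishes at y. Choose f1, f2 \<in> J(x) with f1 y1 = 0 and f2 y2 = 0 and put z = y1 + y2.
   Then f1 z = (f1 - f2) y2 and f2 z = (f2 - f1) y1, so |f1 z| + |f2 z| \<le> \<epsilon> (norm y1 + norm y2)
   < 2 norm z, and some f \<in> J(x) has |f z| < norm z. For any f \<in> J(x),
   norm (x + t z) \<ge> f (x + t z) \<ge> norm x - |t| |f z|, and squaring this gives approximate
   orthogonality of x and z with parameter |f z| / norm z < 1. *)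

(* The graph of a linear functional on a subspace, bounded by the norm. *)
definition dominated_linear_graph :: "('a::real_normed_vector \<times> real) set \<Rightarrow> bool" where
  "dominated_linear_graph G \<longleftrightarrow> (0, 0) \<in> G
    \<and> (\<forall>v a w b c d. (v, a) \<in> G \<longrightarrow> (w, b) \<in> G \<longrightarrow> (c *\<^sub>R v + d *\<^sub>R w, c * a + d * b) \<in> G)
    \<and> (\<forall>(v, a) \<in> G. a \<le> norm v)"

lemma dominated_linear_graphD:
  assumes "dominated_linear_graph G"
  shows dominated_linear_graph_zero: "(0, 0) \<in> G"
    and dominated_linear_graph_lincomb:
      "\<And>v a w b c d. (v, a) \<in> G \<Longrightarrow> (w, b) \<in> G \<Longrightarrow> (c *\<^sub>R v + d *\<^sub>R w, c * a + d * b) \<in> G"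
    and dominated_linear_graph_le_norm: "\<And>v a. (v, a) \<in> G \<Longrightarrow> a \<le> norm v"
  using assms unfolding dominated_linear_graph_def by blast+

lemma dominated_linear_graph_scaleR:
  assumes "dominated_linear_graph G" "(v, a) \<in> G"
  shows "(r *\<^sub>R v, r * a) \<in> G"
  using dominated_linear_graph_lincomb[OF assms(1,2) dominated_linear_graph_zero[OF assms(1)], of r 0]
  by simp

lemma dominated_linear_graph_add:
  assumes "dominated_linear_graph G" "(v, a) \<in> G" "(w, b) \<in> G"
  shows "(v + w, a + b) \<in> G"
  using dominated_linear_graph_lincomb[OF assms, of 1 1] by simp

lemma dominated_linear_graph_unique:
  assumes G: "dominated_linear_graph G" and "(v, a) \<in> G" "(v, b) \<in> G"
  shows "a = b"
proof -
  have "(0, a - b) \<in> G" "(0, b - a) \<in> G"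
    using dominated_linear_graph_lincomb[OF G assms(2,3), of 1 "-1"]
      dominated_linear_graph_lincomb[OF G assms(3,2), of 1 "-1"] by simp_all
  then have "a - b \<le> 0" "b - a \<le> 0"
    using dominated_linear_graph_le_norm[OF G] by fastforce+
  then show ?thesis by simp
qed

lemma dominated_linear_graph_gap:
  assumes G: "dominated_linear_graph G"
  obtains c where "\<And>u a. (u, a) \<in> G \<Longrightarrow> a - c \<le> norm (u - w)"
    and "\<And>v b. (v, b) \<in> G \<Longrightarrow> b + c \<le> norm (v + w)"
proof -
  have gap: "a - norm (u - w) \<le> norm (v + w) - b" if "(u, a) \<in> G" "(v, b) \<in> G" for u a v b
  proof -
    have "a + b \<le> norm (u + v)"
      using dominated_linear_graph_le_norm[OF G dominated_linear_graph_add[OF G that]] .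
    also have "\<dots> \<le> norm (u - w) + norm (v + w)"
      using norm_triangle_ineq[of "u - w" "v + w"] by simp
    finally show ?thesis by simp
  qed
  define S where "S = {a - norm (u - w) | u a. (u, a) \<in> G}"
  have "S \<noteq> {}"
    using dominated_linear_graph_zero[OF G] unfolding S_def by blast
  have "bdd_above S"
    using gap[OF _ dominated_linear_graph_zero[OF G]] unfolding S_def bdd_above_def by auto
  show thesis
  proof (intro that)
    show "a - Sup S \<le> norm (u - w)" if "(u, a) \<in> G" for u a
      using cSup_upper[of "a - norm (u - w)" S] \<open>bdd_above S\<close> that by (force simp: S_def)
    show "b + Sup S \<le> norm (v + w)" if "(v, b) \<in> G" for v b
      using cSup_least[of S "norm (v + w) - b"] \<open>S \<noteq> {}\<close> gap[OF _ that] by (force simp: S_def)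
  qed
qed

lemma dominated_linear_graph_extension_value:
  assumes G: "dominated_linear_graph G"
  obtains c where "\<And>u a t. (u, a) \<in> G \<Longrightarrow> a + t * c \<le> norm (u + t *\<^sub>R w)"
proof -
  obtain c where lower: "\<And>u a. (u, a) \<in> G \<Longrightarrow> a - c \<le> norm (u - w)"
    and upper: "\<And>v b. (v, b) \<in> G \<Longrightarrow> b + c \<le> norm (v + w)"
    using dominated_linear_graph_gap[OF G, where w = w] by blast
  have "a + t * c \<le> norm (u + t *\<^sub>R w)" if ua: "(u, a) \<in> G" for u a t
  proof (cases t "0 :: real" rule: linorder_cases)
    case less
    have "a + t * c = - t * (a / - t - c)"
      using less by (simp add: field_simps)
    also have "\<dots> \<le> - t * norm (u /\<^sub>R - t - w)"
      using less lower[OF dominated_linear_graph_scaleR[OF G ua, of "inverse (- t)"]]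
      by (intro mult_left_mono) (simp_all add: divide_inverse_commute)
    also have "\<dots> = norm ((- t) *\<^sub>R (u /\<^sub>R - t - w))"
      using less by simp
    also have "(- t) *\<^sub>R (u /\<^sub>R - t - w) = u + t *\<^sub>R w"
      using less by (simp add: algebra_simps)
    finally show ?thesis .
  next
    case equal
    then show ?thesis using dominated_linear_graph_le_norm[OF G ua] by simp
  next
    case greater
    have "a + t * c = t * (a / t + c)"
      using greater by (simp add: field_simps)
    also have "\<dots> \<le> t * norm (u /\<^sub>R t + w)"
      using greater upper[OF dominated_linear_graph_scaleR[OF G ua, of "inverse t"]]
      by (intro mult_left_mono) (simp_all add: divide_inverse_commute)
    also have "\<dots> = norm (t *\<^sub>R (u /\<^sub>R t + w))"
      using greater by simp
    also have "t *\<^sub>R (u /\<^sub>R t + w) = u + t *\<^sub>R w"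
      using greater by (simp add: algebra_simps)
    finally show ?thesis .
  qed
  then show thesis using that by blast
qed

lemma dominated_linear_graph_extend:
  assumes G: "dominated_linear_graph G"
  obtains G' c where "dominated_linear_graph G'" "G \<subseteq> G'" "(w, c) \<in> G'"
proof -
  obtain c where c: "\<And>u a t. (u, a) \<in> G \<Longrightarrow> a + t * c \<le> norm (u + t *\<^sub>R w)"
    using dominated_linear_graph_extension_value[OF G, where w = w] by blast
  define G' where "G' = {(u + t *\<^sub>R w, a + t * c) | u a t. (u, a) \<in> G}"
  have "dominated_linear_graph G'"
    unfolding dominated_linear_graph_def
  proof (intro conjI allI impI ballI)
    show "(0, 0) \<in> G'"
      using dominated_linear_graph_zero[OF G] unfolding G'_def by force
  next
    fix v a v' a' r s
    assume "(v, a) \<in> G'" "(v', a') \<in> G'"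
    then obtain u b t u' b' t' where "(u, b) \<in> G" "(u', b') \<in> G"
      and "v = u + t *\<^sub>R w" "a = b + t * c" "v' = u' + t' *\<^sub>R w" "a' = b' + t' * c"
      unfolding G'_def by blast
    moreover have "(r *\<^sub>R u + s *\<^sub>R u', r * b + s * b') \<in> G"
      using dominated_linear_graph_lincomb[OF G] calculation by blast
    ultimately show "(r *\<^sub>R v + s *\<^sub>R v', r * a + s * a') \<in> G'"
      unfolding G'_def by (force intro: exI[of _ "r * t + s * t'"] simp: algebra_simps)
  next
    fix p assume "p \<in> G'"
    then show "case p of (v, a) \<Rightarrow> a \<le> norm v"
      using c unfolding G'_def by force
  qed
  moreover have "G \<subseteq> G'"
    unfolding G'_def by (force intro: exI[of _ 0])
  moreover have "(w, c) \<in> G'"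
    using dominated_linear_graph_zero[OF G] unfolding G'_def by (force intro: exI[of _ 1])
  ultimately show thesis using that by blast
qed

lemma dominated_linear_graph_Union_chain:
  assumes "\<C> \<noteq> {}" "subset.chain \<A> \<C>"
    and dom: "\<And>G. G \<in> \<C> \<Longrightarrow> dominated_linear_graph G"
  shows "dominated_linear_graph (\<Union>\<C>)"
  unfolding dominated_linear_graph_def
proof (intro conjI allI impI ballI)
  show "(0, 0) \<in> \<Union>\<C>"
    using \<open>\<C> \<noteq> {}\<close> dom dominated_linear_graph_zero by blast
next
  fix v a w b c d
  assume "(v, a) \<in> \<Union>\<C>" "(w, b) \<in> \<Union>\<C>"
  then obtain X Y where XY: "X \<in> \<C>" "Y \<in> \<C>" "(v, a) \<in> X" "(w, b) \<in> Y"
    by blast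
  have "X \<subseteq> Y \<or> Y \<subseteq> X"
    using \<open>subset.chain \<A> \<C>\<close> XY(1,2) by (auto simp: subset_chain_def)
  then obtain Z where "Z \<in> \<C>" "(v, a) \<in> Z" "(w, b) \<in> Z"
    using XY by blast
  then show "(c *\<^sub>R v + d *\<^sub>R w, c * a + d * b) \<in> \<Union>\<C>"
    using dom dominated_linear_graph_lincomb by blast
next
  fix p assume "p \<in> \<Union>\<C>"
  then show "case p of (v, a) \<Rightarrow> a \<le> norm v"
    using dom dominated_linear_graph_le_norm by fastforce
qed

lemma dominated_linear_graph_total_extension:
  assumes "dominated_linear_graph G"
  obtains M where "dominated_linear_graph M" "G \<subseteq> M" "\<And>w. \<exists>c. (w, c) \<in> M"
proof -
  define \<A> where "\<A> = {M. dominated_linear_graph M \<and> G \<subseteq> M}"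
  have "\<exists>M\<in>\<A>. \<forall>X\<in>\<A>. M \<subseteq> X \<longrightarrow> X = M"
  proof (rule subset_Zorn_nonempty)
    show "\<A> \<noteq> {}"
      using assms unfolding \<A>_def by blast
    show "\<Union>\<C> \<in> \<A>" if "\<C> \<noteq> {}" "subset.chain \<A> \<C>" for \<C>
    proof -
      have "\<C> \<subseteq> \<A>"
        using that(2) by (simp add: subset_chain_def)
      then have "dominated_linear_graph (\<Union>\<C>)"
        using dominated_linear_graph_Union_chain[OF that] unfolding \<A>_def by blast
      moreover have "G \<subseteq> \<Union>\<C>"
        using \<open>\<C> \<subseteq> \<A>\<close> \<open>\<C> \<noteq> {}\<close> unfolding \<A>_def by blast
      ultimately show ?thesis
        unfolding \<A>_def by blast
    qed
  qed
  then obtain M where "M \<in> \<A>" and "\<forall>X\<in>\<A>. M \<subseteq> X \<longrightarrow> X = M"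
    by blast
  then have M: "dominated_linear_graph M" "G \<subseteq> M"
    and maximal: "\<And>X. dominated_linear_graph X \<Longrightarrow> M \<subseteq> X \<Longrightarrow> X = M"
    unfolding \<A>_def by auto
  have "\<exists>c. (w, c) \<in> M" for w
  proof -
    obtain M' c where "dominated_linear_graph M'" "M \<subseteq> M'" "(w, c) \<in> M'"
      using dominated_linear_graph_extend[OF M(1), where w = w] by blast
    then show ?thesis
      using maximal by blast
  qed
  with M show thesis using that by blast
qed

lemma total_dominated_linear_graph_blinfun:
  assumes M: "dominated_linear_graph M" and total: "\<And>v. \<exists>a. (v, a) \<in> M"
  obtains g :: "'a::real_normed_vector \<Rightarrow>\<^sub>L real"
  where "norm g \<le> 1" "\<And>v a. (v, a) \<in> M \<Longrightarrow> g v = a"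
proof -
  define g where "g v = (THE a. (v, a) \<in> M)" for v
  have g_eq: "g v = a" if "(v, a) \<in> M" for v a
    unfolding g_def using that dominated_linear_graph_unique[OF M] by blast
  have g_in: "(v, g v) \<in> M" for v
    using total[of v] g_eq by blast
  have g_lincomb: "g (c *\<^sub>R v + d *\<^sub>R w) = c * g v + d * g w" for c d v w
    using g_eq dominated_linear_graph_lincomb[OF M g_in g_in] by blast
  have g_zero: "g 0 = 0"
    using g_eq[OF dominated_linear_graph_zero[OF M]] .
  have g_abs_le: "\<bar>g v\<bar> \<le> norm v" for v
    using dominated_linear_graph_le_norm[OF M g_in, of v] dominated_linear_graph_le_norm[OF M g_in, of "- v"]
      g_lincomb[of "-1" v 0 0] g_zero by simp
  have "bounded_linear g"
  proof (rule bounded_linear_intro)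
    show "g (v + w) = g v + g w" for v w
      using g_lincomb[of 1 v 1 w] by simp
    show "g (r *\<^sub>R v) = r *\<^sub>R g v" for r v
      using g_lincomb[of r v 0 0] g_zero by simp
    show "norm (g v) \<le> norm v * 1" for v
      using g_abs_le[of v] by simp
  qed
  then have "blinfun_apply (Blinfun g) = g"
    by (rule bounded_linear_Blinfun_apply)
  then have "norm (Blinfun g) \<le> 1"
    using g_abs_le by (intro norm_blinfun_bound) auto
  with that show thesis
    using \<open>blinfun_apply (Blinfun g) = g\<close> g_eq by metis
qed

lemma dominated_linear_graph_Hahn_Banach:
  assumes "dominated_linear_graph G"
  obtains g :: "'a::real_normed_vector \<Rightarrow>\<^sub>L real"
  where "norm g \<le> 1" "\<And>v a. (v, a) \<in> G \<Longrightarrow> g v = a"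
proof -
  obtain M where "dominated_linear_graph M" "G \<subseteq> M" "\<And>v. \<exists>a. (v, a) \<in> M"
    using dominated_linear_graph_total_extension[OF assms] by blast
  then show thesis
    using total_dominated_linear_graph_blinfun that by (metis subsetD)
qed

lemma bj_orth_norm_le:
  assumes "bj_orth x y"
  shows "\<bar>a\<bar> * norm x \<le> norm (a *\<^sub>R x + b *\<^sub>R y)"
proof (cases "a = 0")
  case False
  have "\<bar>a\<bar> * norm x \<le> \<bar>a\<bar> * norm (x + (b / a) *\<^sub>R y)"
    using assms unfolding bj_orth_def by (simp add: mult_left_mono)
  also have "\<dots> = norm (a *\<^sub>R x + b *\<^sub>R y)"
    using False by (simp add: scaleR_add_right flip: norm_scaleR)
  finally show ?thesis .
qed simp

lemma bj_orth_dominated_linear_graph: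
  assumes "bj_orth x y"
  shows "dominated_linear_graph {(a *\<^sub>R x + b *\<^sub>R y, a * norm x) | a b. True}"
    (is "dominated_linear_graph ?G")
  unfolding dominated_linear_graph_def
proof (intro conjI allI impI ballI)
  show "(0, 0) \<in> ?G"
    by (force intro: exI[of _ 0])
next
  fix v a w b c d
  assume "(v, a) \<in> ?G" "(w, b) \<in> ?G"
  then obtain a1 b1 a2 b2 where "v = a1 *\<^sub>R x + b1 *\<^sub>R y" "a = a1 * norm x"
    and "w = a2 *\<^sub>R x + b2 *\<^sub>R y" "b = a2 * norm x"
    by blast
  then show "(c *\<^sub>R v + d *\<^sub>R w, c * a + d * b) \<in> ?G"
    by (intro CollectI exI[of _ "c * a1 + d * a2"] exI[of _ "c * b1 + d * b2"])
      (simp add: algebra_simps)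
next
  fix p assume "p \<in> ?G"
  then obtain a b where p: "p = (a *\<^sub>R x + b *\<^sub>R y, a * norm x)"
    by blast
  have "a * norm x \<le> \<bar>a\<bar> * norm x"
    by (simp add: mult_right_mono)
  also have "\<dots> \<le> norm (a *\<^sub>R x + b *\<^sub>R y)"
    using bj_orth_norm_le[OF assms] .
  finally show "case p of (v, a) \<Rightarrow> a \<le> norm v"
    using p by simp
qed

lemma bj_orth_supp_funct:
  assumes "x \<noteq> 0" "bj_orth x y"
  obtains f where "f \<in> supp_funct x" "f y = 0"
proof -
  obtain g :: "'a \<Rightarrow>\<^sub>L real" where "norm g \<le> 1"
    and g: "\<And>v a. (v, a) \<in> {(a *\<^sub>R x + b *\<^sub>R y, a * norm x) | a b. True} \<Longrightarrow> g v = a"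
    using dominated_linear_graph_Hahn_Banach[OF bj_orth_dominated_linear_graph[OF assms(2)]] by blast
  have gx: "g x = norm x" and gy: "g y = 0"
    using g[of x "norm x"] g[of y 0] by (force intro: exI[of _ 1] exI[of _ 0])+
  have "norm x \<le> norm g * norm x"
    using norm_blinfun[of g x] gx by simp
  with \<open>norm g \<le> 1\<close> \<open>x \<noteq> 0\<close> have "norm g = 1"
    by simp
  with gx gy that show thesis
    unfolding supp_funct_def by blast
qed

lemma power2_diff_mult_le:
  fixes n s N :: real
  assumes "0 \<le> n" "0 \<le> s" "n - s \<le> N"
  shows "n\<^sup>2 - 2 * n * s \<le> N\<^sup>2"
proof (cases "n \<le> s")
  case True
  then have "n * n \<le> n * s"
    using assms(1) by (rule mult_left_mono)
  then show ?thesis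
    using zero_le_square[of n] zero_le_square[of N] unfolding power2_eq_square by linarith
next
  case False
  then have "(n - s)\<^sup>2 \<le> N\<^sup>2"
    using assms(3) by (intro power_mono) simp_all
  moreover have "n\<^sup>2 - 2 * n * s \<le> (n - s)\<^sup>2"
    by (simp add: power2_diff)
  ultimately show ?thesis
    by linarith
qed

lemma supp_funct_bj_orth_approx:
  assumes "f \<in> supp_funct x"
  shows "bj_orth_approx (\<bar>f z\<bar> / norm z) x z"
  unfolding bj_orth_approx_def
proof
  fix t :: real
  have fx: "f x = norm x" and "norm f = 1"
    using assms unfolding supp_funct_def by auto
  have "norm x - \<bar>t\<bar> * \<bar>f z\<bar> \<le> norm x + t * f z"
    using abs_ge_minus_self[of "t * f z"] by (simp add: abs_mult)
  also have "\<dots> = f (x + t *\<^sub>R z)"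
    using fx by (simp add: blinfun.add_right blinfun.scaleR_right)
  also have "\<dots> \<le> norm (x + t *\<^sub>R z)"
    using norm_blinfun[of f "x + t *\<^sub>R z"] \<open>norm f = 1\<close> by simp
  finally have "norm x - \<bar>t\<bar> * \<bar>f z\<bar> \<le> norm (x + t *\<^sub>R z)" .
  then have "(norm x)\<^sup>2 - 2 * norm x * (\<bar>t\<bar> * \<bar>f z\<bar>) \<le> (norm (x + t *\<^sub>R z))\<^sup>2"
    by (intro power2_diff_mult_le) simp_all
  moreover have "\<bar>f z\<bar> / norm z * norm (t *\<^sub>R z) = \<bar>t\<bar> * \<bar>f z\<bar>"
    by (cases "z = 0") simp_all
  ultimately show "(norm x)\<^sup>2 - 2 * (\<bar>f z\<bar> / norm z) * norm x * norm (t *\<^sub>R z)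
      \<le> (norm (x + t *\<^sub>R z))\<^sup>2"
    by (simp add: mult_ac)
qed

lemma eps_smooth_abs_apply_le:
  assumes "eps_smooth \<epsilon> x" "f \<in> supp_funct x" "g \<in> supp_funct x" "g y = 0"
  shows "\<bar>f y\<bar> \<le> \<epsilon> * norm y"
proof -
  have "\<bar>f y\<bar> = norm ((f - g) y)"
    using assms(4) by (simp add: blinfun.diff_left)
  also have "\<dots> \<le> norm (f - g) * norm y"
    by (rule norm_blinfun)
  also have "\<dots> \<le> \<epsilon> * norm y"
    using assms(1-3) unfolding eps_smooth_def by (simp add: mult_right_mono)
  finally show ?thesis .
qed

theorem theorem4p3:
  fixes x y1 y2 :: "'a::real_normed_vector" and \<epsilon> :: real
  assumes "x \<noteq> 0" and "y1 \<noteq> 0" and "y2 \<noteq> 0"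
    and "bj_orth x y1" and "bj_orth x y2"
    and "eps_smooth \<epsilon> x"
    and "0 \<le> \<epsilon>"
    and "\<epsilon> < 2 * norm (y1 + y2) / (norm y1 + norm y2)"
    and "2 * norm (y1 + y2) / (norm y1 + norm y2) \<le> 2"
  shows "\<exists>\<epsilon>1. 0 \<le> \<epsilon>1 \<and> \<epsilon>1 < 1 \<and> bj_orth_approx \<epsilon>1 x (y1 + y2)"
proof -
  let ?z = "y1 + y2"
  obtain f1 where f1: "f1 \<in> supp_funct x" "f1 y1 = 0"
    using bj_orth_supp_funct[OF assms(1,4)] by blast
  obtain f2 where f2: "f2 \<in> supp_funct x" "f2 y2 = 0"
    using bj_orth_supp_funct[OF assms(1,5)] by blast
  have "\<bar>f1 ?z\<bar> \<le> \<epsilon> * norm y2"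
    using eps_smooth_abs_apply_le[OF assms(6) f1(1) f2] f1(2) by (simp add: blinfun.add_right)
  moreover have "\<bar>f2 ?z\<bar> \<le> \<epsilon> * norm y1"
    using eps_smooth_abs_apply_le[OF assms(6) f2(1) f1] f2(2) by (simp add: blinfun.add_right)
  moreover have "\<epsilon> * (norm y1 + norm y2) < 2 * norm ?z"
    using assms(2,8) by (simp add: pos_less_divide_eq add_pos_nonneg)
  ultimately have "\<bar>f1 ?z\<bar> < norm ?z \<or> \<bar>f2 ?z\<bar> < norm ?z"
    unfolding distrib_left by linarith
  then obtain f where f: "f \<in> supp_funct x" "\<bar>f ?z\<bar> < norm ?z"
    using f1 f2 by blast
  then have "?z \<noteq> 0"
    by auto
  then show ?thesis
    using supp_funct_bj_orth_approx[OF f(1), of ?z] f(2)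
    by (intro exI[of _ "\<bar>f ?z\<bar> / norm ?z"]) simp
qed

end
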